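(* Let $f$ be a function of class $C^2$ on $\mathcal D=[0,1]^2$ with $f(0,0)=f(1,1)=0$. Then for $x\in\mathcal D$, $$\lim_{N\to\infty} N\big(B_N(f\circ A)(x)-f(x)\big)=L_d f(x),$$ where $$L_d f(x)=\frac{x_1(1-x_1)}{2}f_{x_1x_1}(x)+\frac{x_2(1-x_2)}{2d}f_{x_2x_2}(x)-\kappa\, Mx\cdot\nabla f(x).$$
   Context: Fix $d\in(0,1]$ and $\kappa>0$. For each $N$ with $N_2=dN$ an integer, set $N_1=N$, $M=\begin{pmatrix} d & -d\\ -1 & 1\end{pmatrix}$, $A=\mathrm{Id}-\frac{\kappa}{N}M$, and for a function $g$ on $\mathcal D$ $$B_N(g)(x)=\sum_{j_1=0}^{N_1}\sum_{j_2=0}^{N_2}\binom{N_1}{j_1}\binom{N_2}{j_2}x_1^{j_1}(1-x_1)^{N_1-j_1}x_2^{j_2}(1-x_2)^{N_2-j_2}\,g\!\left(\tfrac{j_1}{N_1},\tfrac{j_2}{N_2}\right).$$ Here $(f\circ A)(x)=f(Ax)$. *)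

theory Defs
  imports "HOL-Analysis.Analysis"
begin

definition unit_square :: "(real \<times> real) set" where
  "unit_square = {0..1} \<times> {0..1}"

definition Mmat :: "real \<Rightarrow> real \<times> real \<Rightarrow> real \<times> real" where
  "Mmat d x = (d * fst x - d * snd x, - fst x + snd x)"

definition Amat :: "real \<Rightarrow> real \<Rightarrow> nat \<Rightarrow> real \<times> real \<Rightarrow> real \<times> real" where
  "Amat d \<kappa> N x = x - (\<kappa> / real N) *\<^sub>R Mmat d x"

definition bernstein2 :: "nat \<Rightarrow> nat \<Rightarrow> (real \<times> real \<Rightarrow> real) \<Rightarrow> real \<times> real \<Rightarrow> real" where
  "bernstein2 N1 N2 g x =
     (\<Sum>j1\<le>N1. \<Sum>j2\<le>N2.
        real (N1 choose j1) * real (N2 choose j2)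
        * fst x ^ j1 * (1 - fst x) ^ (N1 - j1)
        * snd x ^ j2 * (1 - snd x) ^ (N2 - j2)
        * g (real j1 / real N1, real j2 / real N2))"

definition C2_on :: "(real \<times> real) set \<Rightarrow> (real \<times> real \<Rightarrow> real)
   \<Rightarrow> (real \<times> real \<Rightarrow> ((real \<times> real) \<Rightarrow>\<^sub>L real))
   \<Rightarrow> (real \<times> real \<Rightarrow> ((real \<times> real) \<Rightarrow>\<^sub>L ((real \<times> real) \<Rightarrow>\<^sub>L real))) \<Rightarrow> bool" where
  "C2_on S f f' f'' \<longleftrightarrow>
     (\<forall>x\<in>S. (f has_derivative blinfun_apply (f' x)) (at x within S)) \<and>
     (\<forall>x\<in>S. (f' has_derivative blinfun_apply (f'' x)) (at x within S)) \<and>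
     continuous_on S f''"

text \<open>The generator L_d f(x); the second partials are f_{x_i x_i}(x) = f''(x) e_i e_i,
  and Mx . grad f(x) = f'(x)(Mx).\<close>
definition L_gen :: "real \<Rightarrow> real
   \<Rightarrow> (real \<times> real \<Rightarrow> ((real \<times> real) \<Rightarrow>\<^sub>L real))
   \<Rightarrow> (real \<times> real \<Rightarrow> ((real \<times> real) \<Rightarrow>\<^sub>L ((real \<times> real) \<Rightarrow>\<^sub>L real)))
   \<Rightarrow> real \<times> real \<Rightarrow> real" where
  "L_gen d \<kappa> f' f'' x =
     fst x * (1 - fst x) / 2 * blinfun_apply (blinfun_apply (f'' x) (1, 0)) (1, 0)
     + snd x * (1 - snd x) / (2 * d) * blinfun_apply (blinfun_apply (f'' x) (0, 1)) (0, 1)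
     - \<kappa> * blinfun_apply (f' x) (Mmat d x)"

end

theory Submission
  imports Defs
begin

(* Expand f to second order at x, f u = f x + f' x (u - x) + f'' x (u - x) (u - x) / 2 + R u.
   Since A y - x = A (y - x) - (kappa / N) M x with A linear, the Bernstein operator of the
   quadratic part is computed exactly from the first two central moments of the binomial
   weights, 0 and x_i (1 - x_i) / N_i; multiplied by N this is an explicit expression tending
   to L_d f(x). Continuity of f'' at x and its boundedness on the square give
   |R u| <= eps |u - x|^2 + C_eps |u - x|^4, and the second and fourth central Bernstein
   moments are O(1/N) and O(1/N^2), so N B_N(R o A)(x) -> 0. *)

lemma sum_choose_Bernstein:
  "(\<Sum>k\<le>n. real (k choose r) * Bernstein n k t) = real (n choose r) * t ^ r"
proof (cases "r \<le> n")
  case False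
  then show ?thesis by (auto intro!: sum.neutral simp: binomial_eq_0)
next
  case True
  have "(\<Sum>k\<le>n. real (k choose r) * Bernstein n k t) = (\<Sum>k=r..n. real (k choose r) * Bernstein n k t)"
    by (rule sum.mono_neutral_right) auto
  also have "\<dots> = (\<Sum>k=r..n. real (n choose r) * t ^ r * Bernstein (n - r) (k - r) t)"
  proof (rule sum.cong[OF refl])
    fix k assume k: "k \<in> {r..n}"
    then have "real (n choose k) * real (k choose r) = real (n choose r) * real ((n - r) choose (k - r))"
      by (metis atLeastAtMost_iff choose_mult of_nat_mult)
    moreover have "t ^ k = t ^ r * t ^ (k - r)" "(n - r) - (k - r) = n - k"
      using k by (auto simp flip: power_add)
    ultimately show "real (k choose r) * Bernstein n k t = real (n choose r) * t ^ r * Bernstein (n - r) (k - r) t"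
      unfolding Bernstein_def by (simp add: algebra_simps)
  qed
  also have "\<dots> = real (n choose r) * t ^ r * (\<Sum>k=r..n. Bernstein (n - r) (k - r) t)"
    by (simp add: sum_distrib_left)
  also have "(\<Sum>k=r..n. Bernstein (n - r) (k - r) t) = (\<Sum>i\<le>n-r. Bernstein (n - r) i t)"
    using sum.atLeastAtMost_shift_0[OF True, of "\<lambda>k. Bernstein (n - r) (k - r) t"]
    by (simp add: atLeast0AtMost)
  finally show ?thesis by simp
qed

lemma sum_central_moment2_Bernstein:
  "(\<Sum>k\<le>n. (real k - real n * t)\<^sup>2 * Bernstein n k t) = real n * t * (1 - t)"
proof -
  define a where "a = real n * t"
  have "(\<Sum>k\<le>n. (real k - a)\<^sup>2 * Bernstein n k t) = (\<Sum>k\<le>n. real k * (real k - 1) * Bernstein n k t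
      + (1 - 2 * a) * (real k * Bernstein n k t) + a\<^sup>2 * Bernstein n k t)"
    by (intro sum.cong refl) algebra
  also have "\<dots> = real n * (real n - 1) * t\<^sup>2 + (1 - 2 * a) * (real n * t) + a\<^sup>2"
    by (simp only: sum.distrib flip: sum_distrib_left) simp
  finally show ?thesis unfolding a_def by algebra
qed

lemma sum_central_moment4_Bernstein:
  "(\<Sum>k\<le>n. (real k - real n * t) ^ 4 * Bernstein n k t)
     = 3 * (real n * t * (1 - t))\<^sup>2 + real n * t * (1 - t) * (1 - 6 * t * (1 - t))"
proof -
  define a where "a = real n * t"
  have choose: "real (k choose 2) = real k * (real k - 1) / 2"
    "real (k choose 3) = real k * (real k - 1) * (real k - 2) / 6"
    "real (k choose 4) = real k * (real k - 1) * (real k - 2) * (real k - 3) / 24" for k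
    by (simp_all add: binomial_gbinomial gbinomial_prod_rev eval_nat_numeral prod.atLeast0_lessThan_Suc)
  \<comment> \<open>expand \<open>(k - a)^4\<close> in the basis \<open>k choose j\<close>, whose Bernstein averages are known\<close>
  have "(\<Sum>k\<le>n. (real k - a) ^ 4 * Bernstein n k t)
      = (\<Sum>k\<le>n. 24 * (real (k choose 4) * Bernstein n k t)
          + (36 - 24 * a) * (real (k choose 3) * Bernstein n k t)
          + (14 - 24 * a + 12 * a\<^sup>2) * (real (k choose 2) * Bernstein n k t)
          + (1 - 4 * a + 6 * a\<^sup>2 - 4 * a ^ 3) * (real k * Bernstein n k t) + a ^ 4 * Bernstein n k t)"
    by (intro sum.cong refl) (unfold choose, algebra)
  also have "\<dots> = 24 * (real (n choose 4) * t ^ 4) + (36 - 24 * a) * (real (n choose 3) * t ^ 3)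
      + (14 - 24 * a + 12 * a\<^sup>2) * (real (n choose 2) * t ^ 2)
      + (1 - 4 * a + 6 * a\<^sup>2 - 4 * a ^ 3) * (real n * t) + a ^ 4"
    by (simp only: sum.distrib sum_choose_Bernstein flip: sum_distrib_left) simp
  finally show ?thesis unfolding choose a_def by algebra
qed

lemma Bernstein_centered_power_eq:
  assumes "0 < n"
  shows "(\<Sum>k\<le>n. (real k / real n - t) ^ j * Bernstein n k t)
    = (\<Sum>k\<le>n. (real k - real n * t) ^ j * Bernstein n k t) / real n ^ j"
proof -
  have "(real k / real n - t) ^ j = (real k - real n * t) ^ j / real n ^ j" for k
    using assms by (simp add: diff_divide_distrib flip: power_divide)
  then show ?thesis by (simp add: sum_divide_distrib)
qed

lemma sum_centered_Bernstein:
  "0 < n \<Longrightarrow> (\<Sum>k\<le>n. (real k / real n - t) * Bernstein n k t) = 0"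
  using Bernstein_centered_power_eq[of n t 1] by (simp add: algebra_simps sum_subtractf flip: sum_distrib_left)

lemma sum_centered_sq_Bernstein:
  "0 < n \<Longrightarrow> (\<Sum>k\<le>n. (real k / real n - t)\<^sup>2 * Bernstein n k t) = t * (1 - t) / real n"
  unfolding Bernstein_centered_power_eq sum_central_moment2_Bernstein by (simp add: power2_eq_square)

lemma sum_centered_pow4_Bernstein_le:
  assumes "0 < n" "0 \<le> t" "t \<le> 1"
  shows "(\<Sum>k\<le>n. (real k / real n - t) ^ 4 * Bernstein n k t) \<le> 1 / (real n)\<^sup>2"
proof -
  define s where "s = t * (1 - t)"
  have "0 \<le> s" using assms(2,3) by (simp add: s_def)
  moreover have "s = 1 / 4 - (t - 1 / 2)\<^sup>2" unfolding s_def by algebra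
  ultimately have s: "0 \<le> s" "s \<le> 1 / 4" by simp_all
  have n: "1 \<le> real n" using assms(1) by simp
  have ns: "0 \<le> real n * s" "real n * s \<le> real n / 4"
    using s mult_left_mono[OF s(2), of "real n"] by simp_all
  then have "3 * (real n * s)\<^sup>2 \<le> 3 / 16 * (real n)\<^sup>2"
    using power_mono[OF ns(2), of 2] by (simp add: power_divide)
  moreover have "real n * s * (1 - 6 * s) \<le> real n / 4"
  proof -
    have "real n * s * (1 - 6 * s) \<le> real n * s" using ns s by (simp add: mult_left_le)
    then show ?thesis using ns by linarith
  qed
  moreover have "real n \<le> (real n)\<^sup>2" using n by (simp add: power2_eq_square)
  ultimately have "3 * (real n * s)\<^sup>2 + real n * s * (1 - 6 * s) \<le> (real n)\<^sup>2"
    by linarith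
  then have "(3 * (real n * s)\<^sup>2 + real n * s * (1 - 6 * s)) / real n ^ 4 \<le> (real n)\<^sup>2 / real n ^ 4"
    by (intro divide_right_mono) auto
  also have "\<dots> = 1 / (real n)\<^sup>2" using n by (simp add: field_simps power2_eq_square power4_eq_xxxx)
  finally show ?thesis
    unfolding Bernstein_centered_power_eq[OF assms(1)] sum_central_moment4_Bernstein s_def by (simp add: mult.assoc)
qed

lemma bernstein2_eq_sum_Bernstein:
  "bernstein2 n m g x = (\<Sum>j1\<le>n. \<Sum>j2\<le>m.
     Bernstein n j1 (fst x) * Bernstein m j2 (snd x) * g (real j1 / real n, real j2 / real m))"
  unfolding bernstein2_def Bernstein_def by (intro sum.cong refl) (simp add: ac_simps)

lemma bernstein2_add: "bernstein2 n m (\<lambda>y. g y + h y) x = bernstein2 n m g x + bernstein2 n m h x"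
  unfolding bernstein2_eq_sum_Bernstein by (simp add: distrib_left sum.distrib)

lemma bernstein2_cmult: "bernstein2 n m (\<lambda>y. c * g y) x = c * bernstein2 n m g x"
  unfolding bernstein2_eq_sum_Bernstein by (simp add: sum_distrib_left ac_simps)

lemma bernstein2_product:
  "bernstein2 n m (\<lambda>y. g (fst y) * h (snd y)) x
     = (\<Sum>k\<le>n. g (real k / real n) * Bernstein n k (fst x)) * (\<Sum>k\<le>m. h (real k / real m) * Bernstein m k (snd x))"
  unfolding bernstein2_eq_sum_Bernstein by (simp add: sum_product ac_simps) (rule sum.swap)

lemma bernstein2_fst: "bernstein2 n m (\<lambda>y. g (fst y)) x = (\<Sum>k\<le>n. g (real k / real n) * Bernstein n k (fst x))"
  using bernstein2_product[of n m "g" "\<lambda>_. 1" x] by simp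

lemma bernstein2_snd: "bernstein2 n m (\<lambda>y. h (snd y)) x = (\<Sum>k\<le>m. h (real k / real m) * Bernstein m k (snd x))"
  using bernstein2_product[of n m "\<lambda>_. 1" h x] by simp

lemma bernstein2_const: "bernstein2 n m (\<lambda>y. c) x = c"
  using bernstein2_fst[of n m "\<lambda>_. c" x] by (simp flip: sum_distrib_left)

lemma bernstein2_mono:
  assumes "x \<in> unit_square" and "\<And>y. y \<in> unit_square \<Longrightarrow> g y \<le> h y"
  shows "bernstein2 n m g x \<le> bernstein2 n m h x"
  unfolding bernstein2_eq_sum_Bernstein
proof (intro sum_mono mult_left_mono)
  fix j1 j2 assume "j1 \<in> {..n}" "j2 \<in> {..m}"
  then have "real j1 / real n \<in> {0..1}" "real j2 / real m \<in> {0..1}"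
    by (auto simp: divide_le_eq_1)
  then show "g (real j1 / real n, real j2 / real m) \<le> h (real j1 / real n, real j2 / real m)"
    by (intro assms(2)) (simp add: unit_square_def)
  show "0 \<le> Bernstein n j1 (fst x) * Bernstein m j2 (snd x)"
    using assms(1) by (intro mult_nonneg_nonneg Bernstein_nonneg) (auto simp: unit_square_def)
qed

lemma bernstein2_abs_le:
  assumes "x \<in> unit_square" and "\<And>y. y \<in> unit_square \<Longrightarrow> \<bar>g y\<bar> \<le> h y"
  shows "\<bar>bernstein2 n m g x\<bar> \<le> bernstein2 n m h x"
proof -
  have "- h y \<le> g y" "g y \<le> h y" if "y \<in> unit_square" for y
    using assms(2)[OF that] by linarith+
  then have "bernstein2 n m (\<lambda>y. - 1 * h y) x \<le> bernstein2 n m g x" "bernstein2 n m g x \<le> bernstein2 n m h x"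
    by (auto intro: bernstein2_mono[OF assms(1)])
  then show ?thesis unfolding bernstein2_cmult by linarith
qed

lemma bernstein2_centered_moments:
  assumes "0 < n" "0 < m"
  shows "bernstein2 n m (\<lambda>y. fst y - fst x) x = 0"
    and "bernstein2 n m (\<lambda>y. snd y - snd x) x = 0"
    and "bernstein2 n m (\<lambda>y. (fst y - fst x) * (snd y - snd x)) x = 0"
    and "bernstein2 n m (\<lambda>y. (fst y - fst x)\<^sup>2) x = fst x * (1 - fst x) / real n"
    and "bernstein2 n m (\<lambda>y. (snd y - snd x)\<^sup>2) x = snd x * (1 - snd x) / real m"
  using bernstein2_fst[of n m "\<lambda>s. s - fst x" x] bernstein2_snd[of n m "\<lambda>s. s - snd x" x]
    bernstein2_product[of n m "\<lambda>s. s - fst x" "\<lambda>s. s - snd x" x]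
    bernstein2_fst[of n m "\<lambda>s. (s - fst x)\<^sup>2" x] bernstein2_snd[of n m "\<lambda>s. (s - snd x)\<^sup>2" x]
  by (simp_all add: assms sum_centered_Bernstein sum_centered_sq_Bernstein)

lemma linear_Pair_expansion:
  fixes \<phi> :: "real \<times> real \<Rightarrow> real"
  assumes "linear \<phi>"
  shows "\<phi> v = fst v * \<phi> (1, 0) + snd v * \<phi> (0, 1)"
proof -
  have "\<phi> v = \<phi> (fst v *\<^sub>R (1, 0) + snd v *\<^sub>R (0, 1))" by simp
  also have "\<dots> = fst v *\<^sub>R \<phi> (1, 0) + snd v *\<^sub>R \<phi> (0, 1)"
    by (simp only: linear_add[OF assms] linear_scale[OF assms])
  finally show ?thesis by simp
qed

lemma bilinear_Pair_diag_expansion: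
  fixes \<beta> :: "real \<times> real \<Rightarrow> real \<times> real \<Rightarrow> real"
  assumes "bilinear \<beta>"
  shows "\<beta> v v = (fst v)\<^sup>2 * \<beta> (1, 0) (1, 0) + fst v * snd v * (\<beta> (1, 0) (0, 1) + \<beta> (0, 1) (1, 0))
    + (snd v)\<^sup>2 * \<beta> (0, 1) (0, 1)"
proof -
  have "linear (\<beta> v)" "\<And>w. linear (\<lambda>u. \<beta> u w)" using assms unfolding bilinear_def by blast+
  then show ?thesis
    using linear_Pair_expansion[of "\<beta> v" v] linear_Pair_expansion[of "\<lambda>u. \<beta> u (1, 0)" v]
      linear_Pair_expansion[of "\<lambda>u. \<beta> u (0, 1)" v]
    by (simp add: algebra_simps power2_eq_square)
qed

lemma bilinear_blinfun_apply2: "bilinear (\<lambda>v w. blinfun_apply (blinfun_apply F v) w)"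
  unfolding bilinear_def
  using bounded_linear.linear[OF blinfun.bounded_linear_right]
    bounded_linear.linear[OF bounded_linear_compose[OF blinfun.bounded_linear_left blinfun.bounded_linear_right]]
  by blast

lemma bernstein2_linear_centered:
  assumes "0 < n" "0 < m" "linear \<phi>"
  shows "bernstein2 n m (\<lambda>y. \<phi> (y - x)) x = 0"
proof -
  have "\<phi> (y - x) = \<phi> (1, 0) * (fst y - fst x) + \<phi> (0, 1) * (snd y - snd x)" for y
    using linear_Pair_expansion[OF assms(3), of "y - x"] by (simp add: ac_simps)
  then have "bernstein2 n m (\<lambda>y. \<phi> (y - x)) x
      = \<phi> (1, 0) * bernstein2 n m (\<lambda>y. fst y - fst x) x + \<phi> (0, 1) * bernstein2 n m (\<lambda>y. snd y - snd x) x"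
    by (simp only: bernstein2_add bernstein2_cmult)
  then show ?thesis
    by (simp add: bernstein2_centered_moments[OF assms(1,2)])
qed

lemma bernstein2_bilinear_centered:
  assumes "0 < n" "0 < m" "bilinear \<beta>"
  shows "bernstein2 n m (\<lambda>y. \<beta> (y - x) (y - x)) x
    = fst x * (1 - fst x) / real n * \<beta> (1, 0) (1, 0) + snd x * (1 - snd x) / real m * \<beta> (0, 1) (0, 1)"
proof -
  have "\<beta> (y - x) (y - x) = \<beta> (1, 0) (1, 0) * (fst y - fst x)\<^sup>2
      + (\<beta> (1, 0) (0, 1) + \<beta> (0, 1) (1, 0)) * ((fst y - fst x) * (snd y - snd x))
      + \<beta> (0, 1) (0, 1) * (snd y - snd x)\<^sup>2" for y
    using bilinear_Pair_diag_expansion[OF assms(3), of "y - x"] by (simp add: ac_simps)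
  then have "bernstein2 n m (\<lambda>y. \<beta> (y - x) (y - x)) x
      = \<beta> (1, 0) (1, 0) * bernstein2 n m (\<lambda>y. (fst y - fst x)\<^sup>2) x
        + (\<beta> (1, 0) (0, 1) + \<beta> (0, 1) (1, 0)) * bernstein2 n m (\<lambda>y. (fst y - fst x) * (snd y - snd x)) x
        + \<beta> (0, 1) (0, 1) * bernstein2 n m (\<lambda>y. (snd y - snd x)\<^sup>2) x"
    by (simp only: bernstein2_add bernstein2_cmult)
  then show ?thesis
    by (simp add: bernstein2_centered_moments[OF assms(1,2)] mult.commute)
qed

lemma bernstein2_second_order_polynomial:
  assumes "0 < n" "0 < m" and a: "linear a" and b: "bilinear b" and W: "linear W"
  shows "bernstein2 n m (\<lambda>y. a (W (y - x) + c) + b (W (y - x) + c) (W (y - x) + c) / 2) x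
    = a c + b c c / 2 + fst x * (1 - fst x) / (2 * real n) * b (W (1, 0)) (W (1, 0))
      + snd x * (1 - snd x) / (2 * real m) * b (W (0, 1)) (W (0, 1))"
proof -
  define \<phi> where "\<phi> v = a (W v) + (b (W v) c + b c (W v)) / 2" for v
  define \<beta> where "\<beta> v w = b (W v) (W w)" for v w
  have b_linear: "linear (b v)" "linear (\<lambda>u. b u v)" for v
    using b unfolding bilinear_def by blast+
  have "linear \<phi>"
    unfolding \<phi>_def using a W
    by (intro linearI) (simp_all add: linear_add linear_scale bilinear_ladd[OF b] bilinear_radd[OF b]
        bilinear_lmul[OF b] bilinear_rmul[OF b] algebra_simps add_divide_distrib)
  moreover have "bilinear \<beta>"
    unfolding \<beta>_def bilinear_def using W b_linear by (auto intro: linear_compose[unfolded o_def])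
  moreover have "a (W v + c) + b (W v + c) (W v + c) / 2 = \<phi> v + 1 / 2 * \<beta> v v + (a c + b c c / 2)" for v
    unfolding \<phi>_def \<beta>_def using a by (simp add: linear_add bilinear_ladd[OF b] bilinear_radd[OF b] algebra_simps)
  ultimately have "bernstein2 n m (\<lambda>y. a (W (y - x) + c) + b (W (y - x) + c) (W (y - x) + c) / 2) x
      = 0 + 1 / 2 * (fst x * (1 - fst x) / real n * \<beta> (1, 0) (1, 0)
          + snd x * (1 - snd x) / real m * \<beta> (0, 1) (0, 1)) + (a c + b c c / 2)"
    using assms(1,2) by (simp only: bernstein2_add bernstein2_cmult bernstein2_const
        bernstein2_linear_centered bernstein2_bilinear_centered)
  then show ?thesis unfolding \<beta>_def by simp
qed

lemma norm_prod_power2: "(norm v)\<^sup>2 = (fst v)\<^sup>2 + (snd v)\<^sup>2" for v :: "real \<times> real"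
  by (cases v) (simp add: norm_Pair)

lemma power2_sum_le: "(a + b)\<^sup>2 \<le> 2 * a\<^sup>2 + 2 * (b::real)\<^sup>2"
proof -
  have "2 * a\<^sup>2 + 2 * b\<^sup>2 - (a + b)\<^sup>2 = (a - b)\<^sup>2" by algebra
  then show ?thesis by (metis diff_ge_0_iff_ge zero_le_power2)
qed

lemma power4_sum_le: "(a + b) ^ 4 \<le> 8 * a ^ 4 + 8 * (b::real) ^ 4"
proof -
  have "(a + b) ^ 4 = ((a + b)\<^sup>2)\<^sup>2" by simp
  also have "\<dots> \<le> (2 * a\<^sup>2 + 2 * b\<^sup>2)\<^sup>2" by (intro power_mono power2_sum_le) simp
  also have "\<dots> \<le> 8 * a ^ 4 + 8 * b ^ 4" using power2_sum_le[of "2 * a\<^sup>2" "2 * b\<^sup>2"] by simp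
  finally show ?thesis .
qed

lemma bernstein2_norm_sq:
  assumes "0 < n" "0 < m"
  shows "bernstein2 n m (\<lambda>y. (norm (y - x))\<^sup>2) x = fst x * (1 - fst x) / real n + snd x * (1 - snd x) / real m"
proof -
  have "(norm (y - x))\<^sup>2 = (fst y - fst x)\<^sup>2 + (snd y - snd x)\<^sup>2" for y :: "real \<times> real"
    by (simp add: norm_prod_power2)
  then show ?thesis by (simp add: bernstein2_add bernstein2_centered_moments[OF assms])
qed

lemma bernstein2_norm_pow4_le:
  assumes "x \<in> unit_square" "0 < n" "0 < m"
  shows "bernstein2 n m (\<lambda>y. norm (y - x) ^ 4) x \<le> 2 / (real n)\<^sup>2 + 2 / (real m)\<^sup>2"
proof -
  have "norm (y - x) ^ 4 \<le> 2 * (fst y - fst x) ^ 4 + 2 * (snd y - snd x) ^ 4" for y :: "real \<times> real"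
  proof -
    have "norm (y - x) ^ 4 = ((norm (y - x))\<^sup>2)\<^sup>2" by (simp flip: power_mult)
    also have "\<dots> = ((fst y - fst x)\<^sup>2 + (snd y - snd x)\<^sup>2)\<^sup>2" by (simp add: norm_prod_power2)
    finally have "norm (y - x) ^ 4 = ((fst y - fst x)\<^sup>2 + (snd y - snd x)\<^sup>2)\<^sup>2" .
    then show ?thesis
      using power2_sum_le[of "(fst y - fst x)\<^sup>2" "(snd y - snd x)\<^sup>2"] by (simp flip: power_mult)
  qed
  then have "bernstein2 n m (\<lambda>y. norm (y - x) ^ 4) x
      \<le> 2 * bernstein2 n m (\<lambda>y. (fst y - fst x) ^ 4) x + 2 * bernstein2 n m (\<lambda>y. (snd y - snd x) ^ 4) x"
    using assms(1) by (simp add: bernstein2_mono flip: bernstein2_cmult bernstein2_add)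
  also have "\<dots> \<le> 2 * (1 / (real n)\<^sup>2) + 2 * (1 / (real m)\<^sup>2)"
    using assms sum_centered_pow4_Bernstein_le[of n "fst x"] sum_centered_pow4_Bernstein_le[of m "snd x"]
      bernstein2_fst[of n m "\<lambda>s. (s - fst x) ^ 4" x] bernstein2_snd[of n m "\<lambda>s. (s - snd x) ^ 4" x]
    by (auto simp: unit_square_def)
  finally show ?thesis by simp
qed

definition second_order_remainder ::
  "('a::real_normed_vector \<Rightarrow> real) \<Rightarrow> ('a \<Rightarrow> 'a \<Rightarrow>\<^sub>L real) \<Rightarrow> ('a \<Rightarrow> 'a \<Rightarrow>\<^sub>L 'a \<Rightarrow>\<^sub>L real) \<Rightarrow> 'a \<Rightarrow> 'a \<Rightarrow> real"
  where "second_order_remainder f f' f'' x u = f u - f x - f' x (u - x) - f'' x (u - x) (u - x) / 2"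

lemma linearization_on_segment_le:
  fixes F :: "'a::real_normed_vector \<Rightarrow> 'b::real_normed_vector" and F' :: "'a \<Rightarrow> 'a \<Rightarrow>\<^sub>L 'b"
  assumes segment: "closed_segment x u \<subseteq> S"
    and F': "\<And>w. w \<in> S \<Longrightarrow> (F has_derivative blinfun_apply (F' w)) (at w within S)"
    and \<eta>: "\<And>w. w \<in> closed_segment x u \<Longrightarrow> norm (F' w - F' x) \<le> \<eta>"
    and t: "t \<in> {0..1}"
  shows "norm (F (x + t *\<^sub>R (u - x)) - F x - F' x (t *\<^sub>R (u - x))) \<le> t * norm (u - x) * \<eta>"
proof -
  have on_segment: "x + s *\<^sub>R (u - x) \<in> closed_segment x u" if "s \<in> {0..1}" for s
    using that unfolding closed_segment_def by (auto intro!: exI[of _ s] simp: algebra_simps)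
  have "norm (F (x + t *\<^sub>R (u - x)) - F x - F' x ((x + t *\<^sub>R (u - x)) - x))
      \<le> norm ((x + t *\<^sub>R (u - x)) - x) * \<eta>"
  proof (rule differentiable_bound_linearization[where S="closed_segment x u" and f'="\<lambda>w. blinfun_apply (F' w)"])
    show "x + s *\<^sub>R (x + t *\<^sub>R (u - x) - x) \<in> closed_segment x u" if "s \<in> {0..1}" for s
      using on_segment[of "s * t"] that t by (simp add: mult_le_one)
    show "(F has_derivative blinfun_apply (F' w)) (at w within closed_segment x u)"
      if "w \<in> closed_segment x u" for w
      using F' segment that by (meson has_derivative_subset subsetD)
    show "onorm (blinfun_apply (F' w) - blinfun_apply (F' x)) \<le> \<eta>" if "w \<in> closed_segment x u" for w
      using \<eta>[OF that] by (simp add: norm_blinfun.rep_eq fun_diff_def flip: blinfun.diff_left)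
  qed simp
  then show ?thesis using t by simp
qed

lemma second_order_remainder_le:
  fixes f :: "'a::real_normed_vector \<Rightarrow> real"
    and f' :: "'a \<Rightarrow> 'a \<Rightarrow>\<^sub>L real" and f'' :: "'a \<Rightarrow> 'a \<Rightarrow>\<^sub>L 'a \<Rightarrow>\<^sub>L real"
  assumes segment: "closed_segment x u \<subseteq> S"
    and f': "\<And>w. w \<in> S \<Longrightarrow> (f has_derivative blinfun_apply (f' w)) (at w within S)"
    and f'': "\<And>w. w \<in> S \<Longrightarrow> (f' has_derivative blinfun_apply (f'' w)) (at w within S)"
    and \<eta>: "\<And>w. w \<in> closed_segment x u \<Longrightarrow> norm (f'' w - f'' x) \<le> \<eta>"
  shows "\<bar>second_order_remainder f f' f'' x u\<bar> \<le> \<eta> * (norm (u - x))\<^sup>2"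
proof -
  define h where "h = u - x"
  have on_segment: "x + t *\<^sub>R h \<in> S" if "t \<in> {0..1}" for t
    using that segment unfolding h_def closed_segment_def by (auto intro!: exI[of _ t] simp: algebra_simps)
  have "0 \<le> \<eta>" using \<eta>[of x] by simp
  define c where "c t = f' (x + t *\<^sub>R h) h - f' x h - t * f'' x h h" for t
  define g where "g t = f (x + t *\<^sub>R h) - t * f' x h - t\<^sup>2 / 2 * f'' x h h" for t
  have g_derivative: "(g has_derivative (\<lambda>s. s * c t)) (at t within {0..1})" if t: "t \<in> {0..1}" for t
  proof -
    have "((\<lambda>t. f (x + t *\<^sub>R h)) has_derivative (\<lambda>s. f' (x + t *\<^sub>R h) (s *\<^sub>R h))) (at t within {0..1})"
    proof (rule has_derivative_in_compose2[where g=f and t=S and g'="\<lambda>w. blinfun_apply (f' w)"])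
      show "(\<lambda>t. x + t *\<^sub>R h) ` {0..1} \<subseteq> S" using on_segment by auto
      show "((\<lambda>t. x + t *\<^sub>R h) has_derivative (\<lambda>s. s *\<^sub>R h)) (at t within {0..1})"
        by (auto intro!: derivative_eq_intros)
    qed (use f' t in auto)
    then have "(g has_derivative (\<lambda>s. f' (x + t *\<^sub>R h) (s *\<^sub>R h) - s * f' x h - (s * (2 * t) / 2) * f'' x h h))
        (at t within {0..1})"
      unfolding g_def by (auto intro!: derivative_eq_intros)
    moreover have "(\<lambda>s. f' (x + t *\<^sub>R h) (s *\<^sub>R h) - s * f' x h - (s * (2 * t) / 2) * f'' x h h) = (\<lambda>s. s * c t)"
      unfolding c_def by (auto simp: blinfun.scaleR_right algebra_simps)
    ultimately show ?thesis by simp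
  qed
  have c_le: "\<bar>c t\<bar> \<le> \<eta> * (norm h)\<^sup>2" if t: "t \<in> {0..1}" for t
  proof -
    have "c t = (f' (x + t *\<^sub>R h) - f' x - f'' x (t *\<^sub>R h)) h"
      unfolding c_def by (simp add: blinfun.bilinear_simps)
    then have "\<bar>c t\<bar> \<le> norm (f' (x + t *\<^sub>R h) - f' x - f'' x (t *\<^sub>R h)) * norm h"
      by (metis norm_blinfun real_norm_def)
    also have "\<dots> \<le> (t * norm h * \<eta>) * norm h"
      using linearization_on_segment_le[OF segment f'' \<eta> t] by (intro mult_right_mono) (auto simp: h_def)
    also have "\<dots> = \<eta> * (t * (norm h)\<^sup>2)" by (simp add: power2_eq_square algebra_simps)
    also have "\<dots> \<le> \<eta> * (norm h)\<^sup>2"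
      using t \<open>0 \<le> \<eta>\<close> by (intro mult_left_mono mult_left_le_one_le) auto
    finally show ?thesis .
  qed
  have "onorm (\<lambda>s. s * c t) \<le> \<eta> * (norm h)\<^sup>2" if "t \<in> {0..1}" for t
  proof (rule onorm_le)
    show "norm (s * c t) \<le> \<eta> * (norm h)\<^sup>2 * norm s" for s
      using c_le[OF that] by (simp add: abs_mult mult.commute mult_left_mono)
  qed
  then have "norm (g 1 - g 0) \<le> \<eta> * (norm h)\<^sup>2 * norm (1 - 0 :: real)"
    by (intro differentiable_bound[OF convex_real_interval(5) g_derivative]) auto
  then show ?thesis
    unfolding second_order_remainder_def g_def h_def by simp
qed

lemma C2_on_second_order_remainder_le:
  assumes C2: "C2_on S f f' f''" and S: "convex S" "compact S" and x: "x \<in> S" and \<epsilon>: "0 < \<epsilon>"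
  obtains C where "0 \<le> C" and "\<And>u. u \<in> S \<Longrightarrow>
    \<bar>second_order_remainder f f' f'' x u\<bar> \<le> \<epsilon> * (norm (u - x))\<^sup>2 + C * (norm (u - x)) ^ 4"
proof -
  have f': "\<And>w. w \<in> S \<Longrightarrow> (f has_derivative blinfun_apply (f' w)) (at w within S)"
    and f'': "\<And>w. w \<in> S \<Longrightarrow> (f' has_derivative blinfun_apply (f'' w)) (at w within S)"
    and cont: "continuous_on S f''"
    using C2 unfolding C2_on_def by blast+
  obtain \<delta> where "0 < \<delta>" and \<delta>: "\<And>w. w \<in> S \<Longrightarrow> norm (w - x) < \<delta> \<Longrightarrow> norm (f'' w - f'' x) \<le> \<epsilon>"
    using cont x \<epsilon> unfolding continuous_on_iff dist_norm by (metis less_imp_le)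
  obtain K where K: "\<And>w. w \<in> S \<Longrightarrow> norm (f'' w - f'' x) \<le> K"
    using compact_imp_bounded[OF compact_continuous_image[OF continuous_on_diff[OF cont continuous_on_const] S(2)]]
    unfolding bounded_iff by blast
  have "0 \<le> K" using K[OF x] by simp
  show thesis
  proof (rule that[of "K / \<delta>\<^sup>2"])
    show "0 \<le> K / \<delta>\<^sup>2" using \<open>0 \<le> K\<close> by simp
  next
    fix u assume u: "u \<in> S"
    define r where "r = norm (u - x)"
    have segment: "closed_segment x u \<subseteq> S" using S(1) x u by (simp add: closed_segment_subset)
    have near: "norm (w - x) \<le> r" if "w \<in> closed_segment x u" for w
      using segment_bound1[OF that] unfolding r_def .
    show "\<bar>second_order_remainder f f' f'' x u\<bar> \<le> \<epsilon> * r\<^sup>2 + K / \<delta>\<^sup>2 * r ^ 4"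
    proof (cases "r < \<delta>")
      case True
      have "\<bar>second_order_remainder f f' f'' x u\<bar> \<le> \<epsilon> * r\<^sup>2"
        unfolding r_def
      proof (rule second_order_remainder_le[OF segment f' f''])
        show "norm (f'' w - f'' x) \<le> \<epsilon>" if "w \<in> closed_segment x u" for w
          using \<delta> segment near[OF that] True that by (meson le_less_trans subsetD)
      qed
      moreover have "0 \<le> K / \<delta>\<^sup>2 * r ^ 4" using \<open>0 \<le> K\<close> by simp
      ultimately show ?thesis by linarith
    next
      case False
      have "\<bar>second_order_remainder f f' f'' x u\<bar> \<le> K * r\<^sup>2"
        unfolding r_def using segment K by (intro second_order_remainder_le[OF segment f' f'']) auto
      also have "\<dots> = K / \<delta>\<^sup>2 * (\<delta>\<^sup>2 * r\<^sup>2)" using \<open>0 < \<delta>\<close> by simp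
      also have "\<dots> \<le> K / \<delta>\<^sup>2 * (r\<^sup>2 * r\<^sup>2)"
        using False \<open>0 < \<delta>\<close> \<open>0 \<le> K\<close> by (intro mult_left_mono mult_right_mono power_mono) auto
      also have "\<dots> \<le> \<epsilon> * r\<^sup>2 + K / \<delta>\<^sup>2 * r ^ 4"
        using \<epsilon> by (simp add: power4_eq_xxxx power2_eq_square mult.assoc)
      finally show ?thesis .
    qed
  qed
qed

lemma linear_Mmat: "linear (Mmat d)"
  by (intro linearI) (simp_all add: Mmat_def algebra_simps)

lemma linear_Amat: "linear (Amat d \<kappa> N)"
  unfolding Amat_def using linear_Mmat
  by (intro linearI) (simp_all add: linear_add linear_scale algebra_simps)

lemma Amat_minus_eq: "Amat d \<kappa> N y - x = Amat d \<kappa> N (y - x) - (\<kappa> / real N) *\<^sub>R Mmat d x"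
  unfolding Amat_def by (simp add: linear_diff[OF linear_Mmat] algebra_simps)

lemma Amat_tendsto: "((\<lambda>N. Amat d \<kappa> N v) \<longlongrightarrow> v) sequentially"
proof -
  have "((\<lambda>N. v - (\<kappa> / real N) *\<^sub>R Mmat d v) \<longlongrightarrow> v - 0 *\<^sub>R Mmat d v) sequentially"
    by (intro tendsto_intros lim_const_over_n)
  then show ?thesis unfolding Amat_def by simp
qed

lemma Amat_in_unit_square:
  assumes y: "y \<in> unit_square" and d: "0 \<le> d" "d \<le> 1" and \<kappa>: "0 \<le> \<kappa>" "\<kappa> \<le> real N"
  shows "Amat d \<kappa> N y \<in> unit_square"
proof -
  define t where "t = \<kappa> / real N"
  have t: "0 \<le> t" "t \<le> 1" using \<kappa> by (auto simp: t_def divide_le_eq_1)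
  then have td: "0 \<le> t * d" "t * d \<le> 1" using d by (auto simp: mult_le_one)
  have convex_combination: "(1 - u) * a + u * b \<in> {0..1}"
    if "a \<in> {0..1}" "b \<in> {0..1}" "0 \<le> u" "u \<le> 1" for a b u :: real
    using convexD_alt[OF convex_real_interval(5) that] by simp
  have "Amat d \<kappa> N y = ((1 - t * d) * fst y + (t * d) * snd y, (1 - t) * snd y + t * fst y)"
    by (simp add: Amat_def Mmat_def t_def algebra_simps)
  moreover have "fst y \<in> {0..1}" "snd y \<in> {0..1}" using y by (auto simp: unit_square_def)
  ultimately show ?thesis
    using t td convex_combination unfolding unit_square_def by (simp del: atLeastAtMost_iff)
qed

lemma norm_Amat_minus_le:
  assumes "y \<in> unit_square" "0 \<le> d" "d \<le> 1" "0 \<le> \<kappa>"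
  shows "norm (Amat d \<kappa> N y - x) \<le> norm (y - x) + 2 * (\<kappa> / real N)"
proof -
  have "norm (Mmat d y) \<le> \<bar>d * (fst y - snd y)\<bar> + \<bar>snd y - fst y\<bar>"
    using norm_Pair_le[of "d * fst y - d * snd y" "- fst y + snd y"] by (simp add: Mmat_def algebra_simps)
  also have "\<dots> \<le> 1 + 1"
    using assms(1-3) by (intro add_mono) (auto simp: unit_square_def abs_mult abs_le_iff mult_le_one)
  finally have "norm ((\<kappa> / real N) *\<^sub>R Mmat d y) \<le> 2 * (\<kappa> / real N)"
    using assms(4) by (simp add: mult.commute mult_left_mono divide_right_mono)
  then show ?thesis
    unfolding Amat_def using norm_triangle_ineq4[of "y - x" "(\<kappa> / real N) *\<^sub>R Mmat d y"]
    by (simp add: algebra_simps)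
qed

(* N (B_N (Q o A)(x) - f x) for the second-order Taylor polynomial Q of f at x *)
definition L_gen_approx :: "real \<Rightarrow> real \<Rightarrow> nat
   \<Rightarrow> (real \<times> real \<Rightarrow> ((real \<times> real) \<Rightarrow>\<^sub>L real))
   \<Rightarrow> (real \<times> real \<Rightarrow> ((real \<times> real) \<Rightarrow>\<^sub>L ((real \<times> real) \<Rightarrow>\<^sub>L real)))
   \<Rightarrow> real \<times> real \<Rightarrow> real" where
  "L_gen_approx d \<kappa> N f' f'' x =
     fst x * (1 - fst x) / 2 * f'' x (Amat d \<kappa> N (1, 0)) (Amat d \<kappa> N (1, 0))
     + snd x * (1 - snd x) / (2 * d) * f'' x (Amat d \<kappa> N (0, 1)) (Amat d \<kappa> N (0, 1))
     - \<kappa> * f' x (Mmat d x) + \<kappa>\<^sup>2 / real N * (f'' x (Mmat d x) (Mmat d x) / 2)"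

lemma L_gen_approx_tendsto: "((\<lambda>N. L_gen_approx d \<kappa> N f' f'' x) \<longlongrightarrow> L_gen d \<kappa> f' f'' x) sequentially"
proof -
  have "((\<lambda>N. L_gen_approx d \<kappa> N f' f'' x)
      \<longlongrightarrow> L_gen d \<kappa> f' f'' x + 0 * (f'' x (Mmat d x) (Mmat d x) / 2)) sequentially"
    unfolding L_gen_approx_def L_gen_def by (intro tendsto_intros Amat_tendsto lim_const_over_n)
  then show ?thesis by simp
qed

lemma bernstein2_Amat_expansion:
  fixes f :: "real \<times> real \<Rightarrow> real"
    and f' :: "real \<times> real \<Rightarrow> (real \<times> real) \<Rightarrow>\<^sub>L real"
    and f'' :: "real \<times> real \<Rightarrow> (real \<times> real) \<Rightarrow>\<^sub>L (real \<times> real) \<Rightarrow>\<^sub>L real"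
  assumes "0 < N" "0 < d" "real m = d * real N"
  shows "real N * (bernstein2 N m (\<lambda>y. f (Amat d \<kappa> N y)) x - f x) = L_gen_approx d \<kappa> N f' f'' x
    + real N * bernstein2 N m (\<lambda>y. second_order_remainder f f' f'' x (Amat d \<kappa> N y)) x"
proof -
  define c where "c = - (\<kappa> / real N) *\<^sub>R Mmat d x"
  have "0 < m" using assms by (metis of_nat_0_less_iff zero_less_mult_iff)
  have Amat_minus: "Amat d \<kappa> N y - x = Amat d \<kappa> N (y - x) + c" for y
    using Amat_minus_eq[of d \<kappa> N y x] by (simp add: c_def)
  define P where "P y = f' x (Amat d \<kappa> N (y - x) + c)
    + f'' x (Amat d \<kappa> N (y - x) + c) (Amat d \<kappa> N (y - x) + c) / 2" for y
  define R where "R y = second_order_remainder f f' f'' x (Amat d \<kappa> N y)" for y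
  have "f (Amat d \<kappa> N y) = f x + P y + R y" for y
    unfolding P_def R_def second_order_remainder_def by (simp add: Amat_minus)
  then have "real N * (bernstein2 N m (\<lambda>y. f (Amat d \<kappa> N y)) x - f x)
      = real N * bernstein2 N m P x + real N * bernstein2 N m R x"
    by (simp add: bernstein2_add bernstein2_const algebra_simps)
  also have "real N * bernstein2 N m P x = L_gen_approx d \<kappa> N f' f'' x"
  proof -
    have BP: "bernstein2 N m P x = f' x c + f'' x c c / 2
        + fst x * (1 - fst x) / (2 * real N) * f'' x (Amat d \<kappa> N (1, 0)) (Amat d \<kappa> N (1, 0))
        + snd x * (1 - snd x) / (2 * real m) * f'' x (Amat d \<kappa> N (0, 1)) (Amat d \<kappa> N (0, 1))"
      unfolding P_def using \<open>0 < N\<close> \<open>0 < m\<close>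
      by (intro bernstein2_second_order_polynomial linear_Amat bilinear_blinfun_apply2
          bounded_linear.linear[OF blinfun.bounded_linear_right])
    have c: "f' x c = - (\<kappa> / real N) * f' x (Mmat d x)"
      "f'' x c c = (\<kappa> / real N)\<^sup>2 * f'' x (Mmat d x) (Mmat d x)"
      unfolding c_def by (simp_all add: blinfun.bilinear_simps power2_eq_square)
    show ?thesis
      unfolding L_gen_approx_def BP c assms(3) using assms(1,2) by (simp add: field_simps power2_eq_square)
  qed
  finally show ?thesis unfolding R_def .
qed

lemma bernstein2_norm_Amat_sq_le:
  assumes x: "x \<in> unit_square" and d: "0 < d" "d \<le> 1" and "0 \<le> \<kappa>" "0 < N" "real m = d * real N"
  shows "real N * bernstein2 N m (\<lambda>y. (norm (Amat d \<kappa> N y - x))\<^sup>2) x \<le> 2 + 2 / d + 8 * \<kappa>\<^sup>2"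
proof -
  define t where "t = \<kappa> / real N"
  have "0 < m" using assms(4-6) d by (metis of_nat_0_less_iff zero_less_mult_iff)
  have "(norm (Amat d \<kappa> N y - x))\<^sup>2 \<le> 2 * (norm (y - x))\<^sup>2 + 8 * t\<^sup>2" if "y \<in> unit_square" for y
  proof -
    have "(norm (Amat d \<kappa> N y - x))\<^sup>2 \<le> (norm (y - x) + 2 * t)\<^sup>2"
      using norm_Amat_minus_le[OF that] d assms(4) by (intro power_mono) (auto simp: t_def)
    also have "\<dots> \<le> 2 * (norm (y - x))\<^sup>2 + 8 * t\<^sup>2" using power2_sum_le[of "norm (y - x)" "2 * t"] by simp
    finally show ?thesis .
  qed
  then have "bernstein2 N m (\<lambda>y. (norm (Amat d \<kappa> N y - x))\<^sup>2) x
      \<le> 2 * (fst x * (1 - fst x) / real N + snd x * (1 - snd x) / real m) + 8 * t\<^sup>2"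
    using bernstein2_mono[OF x, of "\<lambda>y. (norm (Amat d \<kappa> N y - x))\<^sup>2" "\<lambda>y. 2 * (norm (y - x))\<^sup>2 + 8 * t\<^sup>2" N m]
    by (simp add: bernstein2_add bernstein2_cmult bernstein2_const bernstein2_norm_sq[OF \<open>0 < N\<close> \<open>0 < m\<close>])
  then have "real N * bernstein2 N m (\<lambda>y. (norm (Amat d \<kappa> N y - x))\<^sup>2) x
      \<le> real N * (2 * (fst x * (1 - fst x) / real N + snd x * (1 - snd x) / real m) + 8 * t\<^sup>2)"
    by (rule mult_left_mono) simp
  also have "\<dots> = 2 * (fst x * (1 - fst x)) + 2 * (snd x * (1 - snd x) / d) + 8 * (\<kappa>\<^sup>2 / real N)"
    unfolding t_def \<open>real m = d * real N\<close> using \<open>0 < N\<close> d by (simp add: field_simps power2_eq_square)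
  also have "\<dots> \<le> 2 * 1 + 2 * (1 / d) + 8 * \<kappa>\<^sup>2"
  proof (intro add_mono mult_left_mono divide_right_mono)
    show "fst x * (1 - fst x) \<le> 1" "snd x * (1 - snd x) \<le> 1"
      using x by (auto simp: unit_square_def mult_le_one)
    show "\<kappa>\<^sup>2 / real N \<le> \<kappa>\<^sup>2" using \<open>0 < N\<close> by (simp add: divide_le_eq mult_le_cancel_left1)
  qed (use d in auto)
  finally show ?thesis by simp
qed

lemma bernstein2_norm_Amat_pow4_le:
  assumes x: "x \<in> unit_square" and d: "0 < d" "d \<le> 1" and "0 \<le> \<kappa>" "0 < N" "real m = d * real N"
  shows "real N * bernstein2 N m (\<lambda>y. norm (Amat d \<kappa> N y - x) ^ 4) x \<le> (16 + 16 / d\<^sup>2 + 128 * \<kappa> ^ 4) / real N"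
proof -
  define t where "t = \<kappa> / real N"
  have "0 < m" using assms(4-6) d by (metis of_nat_0_less_iff zero_less_mult_iff)
  have "norm (Amat d \<kappa> N y - x) ^ 4 \<le> 8 * norm (y - x) ^ 4 + 128 * t ^ 4" if "y \<in> unit_square" for y
  proof -
    have "norm (Amat d \<kappa> N y - x) ^ 4 \<le> (norm (y - x) + 2 * t) ^ 4"
      using norm_Amat_minus_le[OF that] d assms(4) by (intro power_mono) (auto simp: t_def)
    also have "\<dots> \<le> 8 * norm (y - x) ^ 4 + 128 * t ^ 4" using power4_sum_le[of "norm (y - x)" "2 * t"] by simp
    finally show ?thesis .
  qed
  then have "bernstein2 N m (\<lambda>y. norm (Amat d \<kappa> N y - x) ^ 4) x
      \<le> 8 * bernstein2 N m (\<lambda>y. norm (y - x) ^ 4) x + 128 * t ^ 4"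
    using bernstein2_mono[OF x, of "\<lambda>y. norm (Amat d \<kappa> N y - x) ^ 4" "\<lambda>y. 8 * norm (y - x) ^ 4 + 128 * t ^ 4" N m]
    by (simp add: bernstein2_add bernstein2_cmult bernstein2_const)
  also have "\<dots> \<le> 8 * (2 / (real N)\<^sup>2 + 2 / (real m)\<^sup>2) + 128 * t ^ 4"
    using bernstein2_norm_pow4_le[OF x \<open>0 < N\<close> \<open>0 < m\<close>] by simp
  finally have "real N * bernstein2 N m (\<lambda>y. norm (Amat d \<kappa> N y - x) ^ 4) x
      \<le> real N * (8 * (2 / (real N)\<^sup>2 + 2 / (real m)\<^sup>2) + 128 * t ^ 4)"
    by (rule mult_left_mono) simp
  also have "\<dots> = (16 + 16 / d\<^sup>2 + 128 * \<kappa> ^ 4 / (real N)\<^sup>2) / real N"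
    unfolding t_def \<open>real m = d * real N\<close> using \<open>0 < N\<close> d
    by (simp add: field_simps power2_eq_square power4_eq_xxxx)
  also have "\<dots> \<le> (16 + 16 / d\<^sup>2 + 128 * \<kappa> ^ 4) / real N"
    using \<open>0 < N\<close> by (intro divide_right_mono add_left_mono) (simp_all add: divide_le_eq mult_le_cancel_left1)
  finally show ?thesis .
qed

lemma bernstein2_Amat_remainder_le:
  assumes x: "x \<in> unit_square" and d: "0 < d" "d \<le> 1" and \<kappa>: "0 \<le> \<kappa>"
    and C2: "C2_on unit_square f f' f''" and \<epsilon>: "0 < \<epsilon>"
  obtains C where "\<And>N m. 0 < N \<Longrightarrow> \<kappa> \<le> real N \<Longrightarrow> real m = d * real N \<Longrightarrow>
    \<bar>real N * bernstein2 N m (\<lambda>y. second_order_remainder f f' f'' x (Amat d \<kappa> N y)) x\<bar> \<le> \<epsilon> + C / real N"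
proof -
  define K where "K = 2 + 2 / d + 8 * \<kappa>\<^sup>2"
  have "0 < K" using d by (simp add: K_def add_pos_nonneg)
  have "convex unit_square" "compact unit_square"
    unfolding unit_square_def by (simp_all add: convex_Times compact_Times)
  then obtain C where "0 \<le> C" and C: "\<And>u. u \<in> unit_square \<Longrightarrow>
      \<bar>second_order_remainder f f' f'' x u\<bar> \<le> \<epsilon> / K * (norm (u - x))\<^sup>2 + C * norm (u - x) ^ 4"
    using C2_on_second_order_remainder_le[OF C2 _ _ x, of "\<epsilon> / K"] \<epsilon> \<open>0 < K\<close> by auto
  show thesis
  proof (rule that[of "C * (16 + 16 / d\<^sup>2 + 128 * \<kappa> ^ 4)"])
    fix N m assume N: "0 < N" "\<kappa> \<le> real N" and m: "real m = d * real N"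
    have "\<bar>bernstein2 N m (\<lambda>y. second_order_remainder f f' f'' x (Amat d \<kappa> N y)) x\<bar>
        \<le> bernstein2 N m (\<lambda>y. \<epsilon> / K * (norm (Amat d \<kappa> N y - x))\<^sup>2 + C * norm (Amat d \<kappa> N y - x) ^ 4) x"
      using d \<kappa> N by (intro bernstein2_abs_le[OF x] C Amat_in_unit_square) auto
    also have "\<dots> = \<epsilon> / K * bernstein2 N m (\<lambda>y. (norm (Amat d \<kappa> N y - x))\<^sup>2) x
        + C * bernstein2 N m (\<lambda>y. norm (Amat d \<kappa> N y - x) ^ 4) x"
      by (simp only: bernstein2_add bernstein2_cmult)
    finally have "\<bar>real N * bernstein2 N m (\<lambda>y. second_order_remainder f f' f'' x (Amat d \<kappa> N y)) x\<bar>
        \<le> real N * (\<epsilon> / K * bernstein2 N m (\<lambda>y. (norm (Amat d \<kappa> N y - x))\<^sup>2) x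
          + C * bernstein2 N m (\<lambda>y. norm (Amat d \<kappa> N y - x) ^ 4) x)"
      unfolding abs_mult abs_of_nat by (rule mult_left_mono) simp
    also have "\<dots> = \<epsilon> / K * (real N * bernstein2 N m (\<lambda>y. (norm (Amat d \<kappa> N y - x))\<^sup>2) x)
        + C * (real N * bernstein2 N m (\<lambda>y. norm (Amat d \<kappa> N y - x) ^ 4) x)"
      by (simp only: distrib_left mult.left_commute)
    also have "\<dots> \<le> \<epsilon> / K * K + C * ((16 + 16 / d\<^sup>2 + 128 * \<kappa> ^ 4) / real N)"
      using \<epsilon> \<open>0 < K\<close> \<open>0 \<le> C\<close> bernstein2_norm_Amat_sq_le[OF x d \<kappa> N(1) m]
        bernstein2_norm_Amat_pow4_le[OF x d \<kappa> N(1) m]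
      by (intro add_mono mult_left_mono) (simp_all add: K_def)
    finally show "\<bar>real N * bernstein2 N m (\<lambda>y. second_order_remainder f f' f'' x (Amat d \<kappa> N y)) x\<bar>
        \<le> \<epsilon> + C * (16 + 16 / d\<^sup>2 + 128 * \<kappa> ^ 4) / real N"
      using \<open>0 < K\<close> by simp
  qed
qed

lemma bernstein2_Amat_remainder_tendsto_0:
  assumes x: "x \<in> unit_square" and d: "0 < d" "d \<le> 1" and \<kappa>: "0 \<le> \<kappa>"
    and C2: "C2_on unit_square f f' f''"
    and F: "F \<le> sequentially" and m: "eventually (\<lambda>N. real (m N) = d * real N) F"
  shows "((\<lambda>N. real N * bernstein2 N (m N) (\<lambda>y. second_order_remainder f f' f'' x (Amat d \<kappa> N y)) x)
    \<longlongrightarrow> 0) F"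
proof (rule tendstoI)
  fix e :: real assume "0 < e"
  then obtain C where C: "\<And>N m. 0 < N \<Longrightarrow> \<kappa> \<le> real N \<Longrightarrow> real m = d * real N \<Longrightarrow>
      \<bar>real N * bernstein2 N m (\<lambda>y. second_order_remainder f f' f'' x (Amat d \<kappa> N y)) x\<bar> \<le> e / 2 + C / real N"
    using bernstein2_Amat_remainder_le[OF x d \<kappa> C2, of "e / 2"] by auto
  have large: "eventually (\<lambda>N. \<kappa> \<le> real N) sequentially"
    using filterlim_real_sequentially by (simp add: filterlim_at_top)
  have small: "eventually (\<lambda>N. C / real N < e / 2) sequentially"
    using \<open>0 < e\<close> by (intro order_tendstoD(2)[OF lim_const_over_n]) simp
  have "eventually (\<lambda>N. 0 < N \<and> \<kappa> \<le> real N \<and> C / real N < e / 2) F"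
    by (intro filter_leD[OF F] eventually_conj eventually_gt_at_top large small)
  with m show "eventually (\<lambda>N. dist (real N * bernstein2 N (m N)
      (\<lambda>y. second_order_remainder f f' f'' x (Amat d \<kappa> N y)) x) 0 < e) F"
  proof eventually_elim
    case (elim N)
    then have "C / real N < e / 2"
      "\<bar>real N * bernstein2 N (m N) (\<lambda>y. second_order_remainder f f' f'' x (Amat d \<kappa> N y)) x\<bar>
        \<le> e / 2 + C / real N"
      by (auto intro: C)
    then show ?case by (simp only: dist_real_def diff_zero)
  qed
qed

theorem lemma4:
  fixes d \<kappa> :: real
    and f :: "real \<times> real \<Rightarrow> real"
    and f' :: "real \<times> real \<Rightarrow> ((real \<times> real) \<Rightarrow>\<^sub>L real)"
    and f'' :: "real \<times> real \<Rightarrow> ((real \<times> real) \<Rightarrow>\<^sub>L ((real \<times> real) \<Rightarrow>\<^sub>L real))"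
    and x :: "real \<times> real"
  assumes d: "0 < d" "d \<le> 1"
    and \<kappa>: "0 < \<kappa>"
    and C2: "C2_on unit_square f f' f''"
    and f00: "f (0, 0) = 0" and f11: "f (1, 1) = 0"
    and x: "x \<in> unit_square"
  shows "((\<lambda>N. real N * (bernstein2 N (nat \<lfloor>d * real N\<rfloor>) (\<lambda>y. f (Amat d \<kappa> N y)) x - f x))
           \<longlongrightarrow> L_gen d \<kappa> f' f'' x)
         (inf sequentially (principal {N. d * real N \<in> \<nat>}))"
proof -
  define F where "F = inf sequentially (principal {N. d * real N \<in> \<nat>})"
  have "F \<le> sequentially" unfolding F_def by simp
  have m: "eventually (\<lambda>N. real (nat \<lfloor>d * real N\<rfloor>) = d * real N) F"
    unfolding F_def eventually_inf_principal by (intro always_eventually allI impI) (auto elim!: Nats_cases)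
  have "((\<lambda>N. L_gen_approx d \<kappa> N f' f'' x + real N * bernstein2 N (nat \<lfloor>d * real N\<rfloor>)
      (\<lambda>y. second_order_remainder f f' f'' x (Amat d \<kappa> N y)) x) \<longlongrightarrow> L_gen d \<kappa> f' f'' x + 0) F"
    using d \<kappa> \<open>F \<le> sequentially\<close>
    by (intro tendsto_add tendsto_mono[OF _ L_gen_approx_tendsto]
        bernstein2_Amat_remainder_tendsto_0[OF x _ _ _ C2 \<open>F \<le> sequentially\<close> m]) auto
  moreover have "eventually (\<lambda>N. L_gen_approx d \<kappa> N f' f'' x + real N * bernstein2 N (nat \<lfloor>d * real N\<rfloor>)
      (\<lambda>y. second_order_remainder f f' f'' x (Amat d \<kappa> N y)) x
      = real N * (bernstein2 N (nat \<lfloor>d * real N\<rfloor>) (\<lambda>y. f (Amat d \<kappa> N y)) x - f x)) F"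
    using m filter_leD[OF \<open>F \<le> sequentially\<close> eventually_gt_at_top[of 0]]
    by eventually_elim (rule bernstein2_Amat_expansion[OF _ d(1), symmetric])
  ultimately show ?thesis
    unfolding F_def by (auto intro: Lim_transform_eventually)
qed

end
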